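(* Let $p$ be a prime, $m\ge1$ with $p>m$, and $1\le k\le m$. Let $E_k(x)=\exp\big(\sum_{i=0}^k\frac{x^{p^i}}{p^i}\big)=\sum_{i\ge0}u_{ki}x^i$, let $\pi_k\in\mathbb{C}_p$ be a root of $\sum_{i=0}^k\frac{x^{p^i}}{p^i}=0$ with $\mathrm{ord}_p\,\pi_k=\frac{1}{p^{k-1}(p-1)}$, and let $\theta_k(x)=E_k(\pi_kx)=\sum_{i\ge0}\theta_{ki}x^i$. Then $\mathrm{ord}_p\,\theta_{ki}\ge i\cdot\frac{p-k}{p^{k+1}}$ for all $i\ge0$.
   Context: $\mathrm{ord}_p$ is the $p$-adic valuation on $\mathbb{C}_p$ normalized by $\mathrm{ord}_p(p)=1$. *)

theory Defs
  imports "HOL-Computational_Algebra.Formal_Power_Series" "HOL-Library.Extended_Real"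
begin

text \<open>A (rank one, real-valued) non-archimedean valuation on a field 'a of characteristic 0,
  normalised by v(p) = 1, with v(0) = infinity.  C_p with ord_p is an instance.\<close>
definition p_valuation :: "nat \<Rightarrow> ('a::field_char_0 \<Rightarrow> ereal) \<Rightarrow> bool" where
  "p_valuation p v \<longleftrightarrow>
     (\<forall>x. v x = \<infinity> \<longleftrightarrow> x = 0) \<and>
     (\<forall>x. v x \<noteq> - \<infinity>) \<and>
     (\<forall>x y. v (x * y) = v x + v y) \<and>
     (\<forall>x y. min (v x) (v y) \<le> v (x + y)) \<and>
     v (of_nat p) = 1"

definition AH_series :: "nat \<Rightarrow> nat \<Rightarrow> 'a::field_char_0 fps" where
  "AH_series p k = (\<Sum>i\<le>k. fps_const (1 / of_nat (p ^ i)) * fps_X ^ (p ^ i))"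

definition E_series :: "nat \<Rightarrow> nat \<Rightarrow> 'a::field_char_0 fps" where
  "E_series p k = fps_exp 1 oo AH_series p k"

definition theta_series :: "nat \<Rightarrow> nat \<Rightarrow> 'a::field_char_0 \<Rightarrow> 'a fps" where
  "theta_series p k \<pi> = E_series p k oo (fps_const \<pi> * fps_X)"

end

(*
  Write u_n for the coefficients of E_k, so that theta_{k,n} = pi^n u_n. It suffices to show
  v(u_n) >= -n g with g = (k + 1 + 1/(p-1)) / p^(k+1), because v(pi) - g = (p-k)/p^(k+1).

  For N >= k, E_k = E_N * prod_{k<j<=N} exp(-x^(p^j)/p^j). The coefficients of E_N below degree
  p^(N+1) are p-integral by Dwork's argument: E_N(x^p) e^(px) = E_N(x)^p exp(x^(p^(N+1))/p^N),
  where e^(px) = 1 mod p because v(p^n/n!) >= 1, and F^p = F(x^p) mod p for polynomials F with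
  p-integral rational coefficients; comparing degree-n coefficients with F the truncation of
  E_N below degree n isolates p u_n. By Legendre's bound v(t!) <= (t-1)/(p-1), the coefficients
  of exp(-x^(p^j)/p^j) have valuation >= -n (j + 1/(p-1))/p^j >= -n g for j > k.
  Taking N = k + n gives the bound for u_n.
*)
theory Submission
  imports Defs "HOL-Number_Theory.Residues"
begin

unbundle fps_syntax

lemma fps_deriv_eq_mult_imp_eq_0:
  fixes G D :: "'a::field_char_0 fps"
  assumes "fps_deriv G = D * G" and "G $ 0 = 0"
  shows "G = 0"
proof -
  have "G $ n = 0" for n
  proof (induction n rule: less_induct)
    case (less n)
    show ?case
    proof (cases n)
      case (Suc m)
      have "of_nat (Suc m) * G $ Suc m = (D * G) $ m"
        using assms(1) by (metis Suc_eq_plus1 fps_deriv_nth)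
      also have "\<dots> = 0"
        unfolding fps_mult_nth using less Suc by (intro sum.neutral) auto
      finally show ?thesis using Suc by (simp del: of_nat_Suc)
    qed (use assms(2) in simp)
  qed
  then show ?thesis by (simp add: fps_eq_iff)
qed

lemma fps_exp_compose_add:
  fixes B C :: "'a::field_char_0 fps"
  assumes "B $ 0 = 0" and "C $ 0 = 0"
  shows "fps_exp 1 oo (B + C) = (fps_exp 1 oo B) * (fps_exp 1 oo C)"
proof -
  have deriv: "fps_deriv (fps_exp 1 oo H) = fps_deriv H * (fps_exp 1 oo H)" if "H $ 0 = 0"
    for H :: "'a fps"
    using that by (simp add: fps_compose_deriv mult.commute)
  let ?G = "(fps_exp 1 oo (B + C)) - (fps_exp 1 oo B) * (fps_exp 1 oo C)"
  have "fps_deriv ?G = (fps_deriv B + fps_deriv C) * ?G"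
    using deriv[of B] deriv[of C] deriv[of "B + C"] assms by (simp add: algebra_simps)
  then have "?G = 0" by (rule fps_deriv_eq_mult_imp_eq_0) simp
  then show ?thesis by simp
qed

lemma fps_exp_compose_sum:
  fixes B :: "'b \<Rightarrow> 'a::field_char_0 fps"
  assumes "\<And>i. i \<in> S \<Longrightarrow> B i $ 0 = 0"
  shows "fps_exp 1 oo sum B S = (\<Prod>i\<in>S. fps_exp 1 oo B i)"
  using assms
proof (induction S rule: infinite_finite_induct)
  case (insert x F)
  then have "sum B F $ 0 = 0" by (simp add: fps_sum_nth)
  with insert show ?case by (simp add: fps_exp_compose_add)
qed auto

lemma fps_exp_compose_monom:
  fixes c :: "'a::field_char_0"
  assumes "q \<ge> 1"
  shows "fps_exp 1 oo (fps_const c * fps_X ^ q) = fps_exp c oo fps_X ^ q"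
proof -
  have "fps_exp 1 oo (fps_const c * fps_X ^ q) = fps_exp 1 oo ((fps_const c * fps_X) oo fps_X ^ q)"
    using assms by (simp flip: fps_const_mult_apply_left)
  also have "\<dots> = fps_exp c oo fps_X ^ q"
    using assms by (simp add: fps_compose_assoc)
  finally show ?thesis .
qed

lemma fps_compose_X_power_nth:
  fixes f :: "'a::comm_ring_1 fps"
  assumes "q \<ge> 1"
  shows "(f oo fps_X ^ q) $ n = (if q dvd n then f $ (n div q) else 0)"
proof -
  have "(f oo fps_X ^ q) $ n = (\<Sum>i = 0..n. if n = q * i then f $ i else 0)"
    unfolding fps_compose_nth by (intro sum.cong) (simp_all flip: power_mult)
  also have "\<dots> = (if q dvd n then f $ (n div q) else 0)"
  proof (cases "q dvd n")
    case True
    then obtain c where "n = q * c" by blast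
    with assms show ?thesis by (simp add: sum.delta' [of _ _ "\<lambda>_. _"] cong: if_cong)
  qed (auto intro!: sum.neutral)
  finally show ?thesis .
qed

lemma fps_X_power_compose_X_power:
  "b \<ge> 1 \<Longrightarrow> (fps_X ^ a oo fps_X ^ b :: 'a::idom fps) = fps_X ^ (a * b)"
  by (simp add: fps_X_power_compose mult.commute flip: power_mult)

lemma fps_compose_X_power_compose_X_power:
  fixes f :: "'a::idom fps"
  assumes "a \<ge> 1" and "b \<ge> 1"
  shows "(f oo fps_X ^ a) oo fps_X ^ b = f oo fps_X ^ (a * b)"
proof -
  have "(f oo fps_X ^ a) oo fps_X ^ b = f oo (fps_X ^ a oo fps_X ^ b)"
    using assms by (intro fps_compose_assoc[symmetric]) simp_all
  then show ?thesis using assms(2) by (simp add: fps_X_power_compose_X_power)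
qed

lemma exp_monom_power:
  assumes "p > 0" and "q \<ge> 1"
  shows "(fps_exp (1 / of_nat (p ^ Suc i)) oo fps_X ^ q) ^ p =
    (fps_exp (1 / of_nat (p ^ i)) oo fps_X ^ q :: 'a::field_char_0 fps)"
proof -
  have "(of_nat p * (1 / of_nat (p ^ Suc i)) :: 'a) = 1 / of_nat (p ^ i)"
    using assms(1) by simp
  then show ?thesis
    using assms(2) by (simp add: fps_compose_power fps_exp_power_mult)
qed

lemma fps_cutoff_Suc:
  "fps_cutoff (Suc m) f = fps_cutoff m f + fps_const (f $ m) * fps_X ^ m"
  by (auto simp: fps_eq_iff fps_X_power_nth less_Suc_eq)

lemma fps_power_minus_cutoff_power_nth:
  fixes f :: "'a::comm_ring_1 fps"
  assumes "f $ 0 = 1" and "n > 0"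
  shows "(f ^ q - fps_cutoff n f ^ q) $ n = of_nat q * f $ n"
proof -
  let ?T = "fps_cutoff n f"
  define S where "S = (\<Sum>i<q. ?T ^ (q - Suc i) * f ^ i)"
  have S0: "S $ 0 = of_nat q"
    unfolding S_def fps_sum_nth using assms by (simp add: fps_nth_power_0)
  have "f ^ q - ?T ^ q = (f - ?T) * S"
    unfolding S_def by (rule power_diff_sumr2)
  also have "f - ?T = fps_X ^ n * fps_shift n f"
    using fps_shift_cutoff'[of n f] by (simp add: algebra_simps)
  finally have "(f ^ q - ?T ^ q) $ n = (fps_shift n f * S) $ 0"
    by (simp add: mult.assoc fps_X_power_mult_nth)
  then show ?thesis using S0 by (simp add: mult.commute)
qed

lemma fps_power_nth_Rats:
  assumes "\<And>n. f $ n \<in> \<rat>"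
  shows "(f ^ i) $ n \<in> \<rat>"
proof (induction i arbitrary: n)
  case (Suc i)
  then show ?case
    using assms unfolding power_Suc fps_mult_nth by (intro Rats_sum Rats_mult) auto
qed (simp add: fps_one_nth)

lemma E_series_nth_Rats: "E_series p k $ n \<in> \<rat>"
proof -
  have AH: "AH_series p k $ n \<in> \<rat>" for n
    unfolding AH_series_def fps_sum_nth by (intro Rats_sum) (simp add: fps_X_power_nth)
  have "(1 / fact i :: 'a) \<in> \<rat>" for i
    by (metis Rats_1 Rats_divide Rats_of_nat of_nat_fact)
  then show ?thesis
    unfolding E_series_def fps_compose_nth
    by (intro Rats_sum Rats_mult fps_power_nth_Rats AH) simp
qed

lemma E_series_eq_prod:
  assumes "p > 0"
  shows "E_series p k = (\<Prod>i\<le>k. fps_exp (1 / of_nat (p ^ i)) oo fps_X ^ (p ^ i) :: 'a::field_char_0 fps)"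
proof -
  have "E_series p k =
      (\<Prod>i\<le>k. fps_exp 1 oo (fps_const (1 / of_nat (p ^ i)) * fps_X ^ (p ^ i)) :: 'a fps)"
    unfolding E_series_def AH_series_def using assms by (intro fps_exp_compose_sum) simp
  also have "\<dots> = (\<Prod>i\<le>k. fps_exp (1 / of_nat (p ^ i)) oo fps_X ^ (p ^ i))"
    using assms by (intro prod.cong refl fps_exp_compose_monom) simp
  finally show ?thesis .
qed

lemma E_series_dwork_identity:
  assumes "p > 0"
  shows "(E_series p N oo fps_X ^ p) * fps_exp (of_nat p) =
    E_series p N ^ p * (fps_exp (1 / of_nat (p ^ N)) oo fps_X ^ (p ^ Suc N) :: 'a::field_char_0 fps)"
proof -
  let ?e = "\<lambda>i. fps_exp (1 / of_nat (p ^ i)) oo fps_X ^ (p ^ i) :: 'a fps"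
  have "E_series p N oo fps_X ^ p = (\<Prod>i\<le>N. ?e i oo fps_X ^ p)"
    using assms by (simp add: E_series_eq_prod fps_compose_prod_distrib)
  also have "\<dots> = (\<Prod>i\<le>N. ?e (Suc i) ^ p)"
  proof (intro prod.cong refl)
    fix i
    have "?e i oo fps_X ^ p = fps_exp (1 / of_nat (p ^ i)) oo fps_X ^ (p ^ Suc i)"
      using assms by (subst fps_compose_X_power_compose_X_power) (simp_all add: mult.commute)
    also have "\<dots> = ?e (Suc i) ^ p"
      using assms by (intro exp_monom_power[symmetric]) simp_all
    finally show "?e i oo fps_X ^ p = ?e (Suc i) ^ p" .
  qed
  also have "\<dots> = (\<Prod>i\<le>N. ?e (Suc i)) ^ p"
    by (rule prod_power_distrib[symmetric])
  finally have shifted: "E_series p N oo fps_X ^ p = (\<Prod>i\<le>N. ?e (Suc i)) ^ p" .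
  have "E_series p N * ?e (Suc N) = (\<Prod>i\<le>Suc N. ?e i)"
    unfolding E_series_eq_prod[OF assms] prod.atMost_Suc ..
  also have "\<dots> = ?e 0 * (\<Prod>i\<le>N. ?e (Suc i))"
    by (rule prod.atMost_Suc_shift)
  finally have "(E_series p N * ?e (Suc N)) ^ p = fps_exp (of_nat p) * (E_series p N oo fps_X ^ p)"
    by (simp add: shifted power_mult_distrib fps_exp_power_mult)
  moreover have "?e (Suc N) ^ p = fps_exp (1 / of_nat (p ^ N)) oo fps_X ^ (p ^ Suc N)"
    using assms by (intro exp_monom_power) simp_all
  ultimately show ?thesis by (simp add: power_mult_distrib mult.commute)
qed

lemma E_series_split:
  assumes "p > 0" and "k \<le> N"
  shows "E_series p k =
    E_series p N * (\<Prod>j\<in>{k<..N}. fps_exp (- 1 / of_nat (p ^ j)) oo fps_X ^ (p ^ j) :: 'a::field_char_0 fps)"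
proof -
  have inverse: "(fps_exp (1 / of_nat (p ^ j)) oo fps_X ^ (p ^ j)) *
      (fps_exp (- 1 / of_nat (p ^ j)) oo fps_X ^ (p ^ j)) = (1 :: 'a fps)" for j
    using assms by (simp flip: fps_compose_mult_distrib fps_exp_add_mult)
  have split: "{..N} = {..k} \<union> {k<..N}" using assms by auto
  have N_split: "E_series p N = E_series p k *
      (\<Prod>j\<in>{k<..N}. fps_exp (1 / of_nat (p ^ j)) oo fps_X ^ (p ^ j) :: 'a fps)"
    unfolding E_series_eq_prod[OF assms(1)] split by (rule prod.union_disjoint) auto
  have "E_series p N * (\<Prod>j\<in>{k<..N}. fps_exp (- 1 / of_nat (p ^ j)) oo fps_X ^ (p ^ j)) =
      E_series p k * (\<Prod>j\<in>{k<..N}. (fps_exp (1 / of_nat (p ^ j)) oo fps_X ^ (p ^ j)) *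
        (fps_exp (- 1 / of_nat (p ^ j)) oo fps_X ^ (p ^ j)) :: 'a fps)"
    by (simp only: N_split mult.assoc prod.distrib)
  then show ?thesis
    by (simp only: inverse prod.neutral_const mult_1_right)
qed

lemma E_series_power_nth:
  assumes "p > 0" and "n < p ^ Suc N"
  shows "(E_series p N ^ p) $ n = ((E_series p N oo fps_X ^ p) * fps_exp (of_nat p)) $ n"
proof -
  let ?R = "fps_exp (1 / of_nat (p ^ N)) oo fps_X ^ (p ^ Suc N) :: 'a::field_char_0 fps"
  have "fps_cutoff (Suc n) ?R = 1"
  proof (rule fps_ext)
    fix j
    have "\<not> p ^ Suc N dvd j" if "0 < j" "j \<le> n"
      using that assms(2) by (auto dest: dvd_imp_le)
    then show "fps_cutoff (Suc n) ?R $ j = 1 $ j"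
      using assms(1) by (auto simp: fps_compose_X_power_nth)
  qed
  then have "(E_series p N ^ p) $ n = (E_series p N ^ p * ?R) $ n"
    using fps_cutoff_right_mult_nth[of n "Suc n" "E_series p N ^ p" ?R] by simp
  then show ?thesis by (simp only: E_series_dwork_identity[OF assms(1)])
qed

lemma of_nat_p_times_E_series_nth:
  assumes "p > 1" and "0 < n" and "n < p ^ Suc N"
  defines "F \<equiv> E_series p N :: 'a::field_char_0 fps"
  defines "T \<equiv> fps_cutoff n F"
  shows "of_nat p * F $ n =
    (((F oo fps_X ^ p) * fps_exp (of_nat p)) $ n - (F oo fps_X ^ p) $ n) - (T ^ p - (T oo fps_X ^ p)) $ n"
proof -
  have "F $ 0 = 1" by (simp add: F_def E_series_def)
  then have "of_nat p * F $ n = (F ^ p - T ^ p) $ n"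
    using fps_power_minus_cutoff_power_nth[of F n p] assms(2) by (simp add: T_def)
  moreover have "(T oo fps_X ^ p) $ n = (F oo fps_X ^ p) $ n"
    using assms(1,2) by (simp add: T_def fps_compose_X_power_nth)
  ultimately show ?thesis
    using E_series_power_nth[of p n N] assms(1,3) by (simp add: F_def)
qed

lemma prime_dvd_power_minus_self:
  fixes a :: int
  assumes "prime p"
  shows "int p dvd a ^ p - a"
proof -
  have nat_case: "[r ^ p = r] (mod p)" for r :: nat
  proof (cases "p dvd r")
    case True
    then have "p dvd r ^ p" using assms by (simp add: prime_dvd_power_iff prime_gt_0_nat)
    with True show ?thesis by (simp add: cong_def dvd_eq_mod_eq_0)
  next
    case False
    have "[r ^ (p - 1) * r = 1 * r] (mod p)"
      using fermat_theorem[OF assms False] by (rule cong_mult) (rule cong_refl)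
    moreover have "r ^ (p - 1) * r = r ^ p"
      using prime_gt_0_nat[OF assms] by (simp flip: power_Suc2)
    ultimately show ?thesis by simp
  qed
  define r where "r = nat (a mod int p)"
  have a_r: "[a = int r] (mod int p)"
    unfolding r_def cong_def using prime_gt_0_nat[OF assms] by simp
  have "[int r ^ p = int r] (mod int p)"
    using nat_case[of r] by (metis cong_int_iff of_nat_power)
  then have "[a ^ p = a] (mod int p)"
    using a_r cong_pow[OF a_r, of p] by (meson cong_sym cong_trans)
  then show ?thesis by (simp add: cong_iff_dvd_diff)
qed

lemma fact_eq_prime_power_times_coprime:
  assumes "prime p"
  shows "\<exists>r. fact n = p ^ (n div p) * fact (n div p) * r \<and> \<not> p dvd r"
proof (induction n)
  case 0
  show ?case using prime_gt_1_nat[OF assms] by (intro exI[of _ 1]) auto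
next
  case (Suc n)
  define q where "q = n div p"
  from Suc obtain r where r: "fact n = p ^ q * fact q * r" "\<not> p dvd r"
    unfolding q_def by blast
  show ?case
  proof (cases "p dvd Suc n")
    case True
    then have sd: "Suc n div p = Suc q"
      unfolding q_def by (simp add: div_Suc dvd_eq_mod_eq_0)
    then have sn: "Suc n = p * Suc q"
      using True by (metis dvd_mult_div_cancel)
    have "fact (Suc n) = Suc n * fact n" by simp
    also have "\<dots> = (p * Suc q) * (p ^ q * fact q * r)"
      by (simp only: sn r(1))
    also have "\<dots> = p ^ Suc q * (Suc q * fact q) * r"
      by (simp only: power_Suc ac_simps)
    finally have "fact (Suc n) = p ^ Suc q * fact (Suc q) * r"
      by simp
    with sd r(2) show ?thesis by metis
  next
    case False
    then have sd: "Suc n div p = q"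
      unfolding q_def by (simp add: div_Suc dvd_eq_mod_eq_0)
    have "fact (Suc n) = p ^ q * fact q * (Suc n * r)"
      by (simp add: r(1) algebra_simps)
    moreover have "\<not> p dvd Suc n * r"
      using False r(2) assms by (metis prime_dvd_mult_iff)
    ultimately show ?thesis using sd by metis
  qed
qed

lemma divide_power_antimono:
  fixes a b :: real
  assumes "i \<le> j" and "2 \<le> b" and "0 \<le> a" and "1 \<le> real i + a"
  shows "(real j + a) / b ^ j \<le> (real i + a) / b ^ i"
  using assms(1)
proof (induction j rule: dec_induct)
  case (step j)
  have "real (Suc j) + a \<le> b * (real j + a)"
    using assms step.hyps mult_right_mono[OF assms(2), of "real j + a"] by simp
  then have "(real (Suc j) + a) / b ^ Suc j \<le> b * (real j + a) / b ^ Suc j"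
    using assms(2) by (intro divide_right_mono) simp_all
  also have "\<dots> = (real j + a) / b ^ j"
    using assms(2) by simp
  finally show ?case using step.IH by linarith
qed simp

locale p_adic_valuation =
  fixes p :: nat and v :: "'a::field_char_0 \<Rightarrow> ereal"
  assumes valuation: "p_valuation p v" and prime: "prime p"
begin

lemma v_eq_infinity_iff [simp]: "v x = \<infinity> \<longleftrightarrow> x = 0"
  and v_neq_minus_infinity [simp]: "v x \<noteq> - \<infinity>"
  and v_mult: "v (x * y) = v x + v y"
  and v_add_ge_min: "min (v x) (v y) \<le> v (x + y)"
  and v_p [simp]: "v (of_nat p) = 1"
  using valuation unfolding p_valuation_def by blast+

lemma v_zero [simp]: "v 0 = \<infinity>"
  by simp

lemma p_gt_1: "p > 1"
  using prime by (rule prime_gt_1_nat)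

lemma v_one [simp]: "v 1 = 0"
proof -
  have "v 1 = v 1 + v 1" using v_mult[of 1 1] by simp
  then show ?thesis using v_eq_infinity_iff[of 1] by (cases "v 1") auto
qed

lemma v_minus [simp]: "v (- x) = v x"
proof -
  have "v (- 1) + v (- 1) = 0" using v_mult[of "- 1" "- 1"] by simp
  then have "v (- 1) = 0" using v_eq_infinity_iff[of "- 1"] by (cases "v (- 1)") auto
  then show ?thesis using v_mult[of "- 1" x] by simp
qed

lemma v_inverse:
  assumes "x \<noteq> 0"
  shows "v (inverse x) = - v x"
proof -
  have "v x + v (inverse x) = 0" using v_mult[of x "inverse x"] assms by simp
  then show ?thesis
    using assms v_eq_infinity_iff[of x] by (cases "v x"; cases "v (inverse x)") auto
qed

lemma v_power: "v (x ^ n) = ereal (real n) * v x"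
proof (induction n)
  case (Suc n)
  then show ?case by (cases "v x") (simp_all add: v_mult algebra_simps)
qed simp

lemma v_p_power [simp]: "v (of_nat p ^ n) = ereal (real n)"
  by (simp add: v_power)

lemma v_mult_ge: "a \<le> v x \<Longrightarrow> b \<le> v y \<Longrightarrow> a + b \<le> v (x * y)"
  by (simp add: v_mult add_mono)

lemma v_add_ge: "a \<le> v x \<Longrightarrow> a \<le> v y \<Longrightarrow> a \<le> v (x + y)"
  using v_add_ge_min[of x y] by (meson min.boundedI order_trans)

lemma v_diff_ge: "a \<le> v x \<Longrightarrow> a \<le> v y \<Longrightarrow> a \<le> v (x - y)"
  using v_add_ge[of a x "- y"] by simp

lemma v_sum_ge: "(\<And>i. i \<in> S \<Longrightarrow> a \<le> v (f i)) \<Longrightarrow> a \<le> v (sum f S)"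
  by (induction S rule: infinite_finite_induct) (simp_all add: v_add_ge)

lemma v_power_ge: "ereal r \<le> v x \<Longrightarrow> ereal (real n * r) \<le> v (x ^ n)"
proof (induction n)
  case (Suc n)
  then have "ereal r + ereal (real n * r) \<le> v (x * x ^ n)" by (intro v_mult_ge)
  then show ?case by (simp add: algebra_simps)
qed simp

lemma v_of_nat_nonneg: "0 \<le> v (of_nat n)"
  by (induction n) (simp_all add: v_add_ge)

lemma v_of_int_nonneg: "0 \<le> v (of_int n)"
proof (cases "n \<ge> 0")
  case True
  then show ?thesis using v_of_nat_nonneg[of "nat n"] by simp
next
  case False
  then have "(of_int n :: 'a) = - of_nat (nat (- n))" by simp
  then show ?thesis using v_of_nat_nonneg[of "nat (- n)"] by simp
qed

lemma v_of_int_multiple_ge: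
  assumes "int p dvd n"
  shows "1 \<le> v (of_int n)"
proof -
  obtain m where "n = int p * m" using assms by blast
  then show ?thesis using v_of_int_nonneg[of m] by (simp add: v_mult add_increasing2)
qed

lemma v_of_int_not_multiple:
  assumes "\<not> int p dvd n"
  shows "v (of_int n) = 0"
proof (rule antisym)
  show "v (of_int n) \<le> 0"
  proof (rule ccontr)
    assume pos: "\<not> v (of_int n) \<le> 0"
    have "coprime (int p) n" using assms prime by (simp add: prime_imp_coprime_int)
    then obtain a b where ab: "a * int p + b * n = 1"
      using bezout_int[of "int p" n] by auto
    let ?d = "min 1 (v (of_int n))"
    have "1 \<le> v (of_int a * of_nat p)"
      using v_of_int_nonneg[of a] by (simp add: v_mult add_increasing)
    then have "?d \<le> v (of_int a * of_nat p)" by (simp add: min.coboundedI1)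
    moreover have "v (of_int n) \<le> v (of_int b * of_int n)"
      using v_of_int_nonneg[of b] by (simp add: v_mult add_increasing)
    then have "?d \<le> v (of_int b * of_int n)" by (simp add: min.coboundedI2)
    ultimately have "?d \<le> v (of_int (a * int p + b * n))"
      by (simp add: v_add_ge)
    with ab pos show False by (simp add: min_def split: if_splits)
  qed
qed (rule v_of_int_nonneg)

lemma v_fact_le:
  assumes "n \<ge> 1"
  shows "v (fact n) \<le> ereal ((real n - 1) / (real p - 1))"
  using assms
proof (induction n rule: less_induct)
  case (less n)
  define q where "q = n div p"
  obtain r where r: "fact n = p ^ q * fact q * r" "\<not> p dvd r"
    using fact_eq_prime_power_times_coprime[OF prime] unfolding q_def by blast
  have "(fact n :: 'a) = of_nat p ^ q * fact q * of_nat r"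
    by (metis r(1) of_nat_fact of_nat_mult of_nat_power)
  moreover have "v (of_nat r) = 0" using v_of_int_not_multiple[of "int r"] r(2) by simp
  ultimately have v_fact_n: "v (fact n) = ereal (real q) + v (fact q)"
    by (simp add: v_mult)
  have p1: "real p - 1 > 0" using p_gt_1 by simp
  show ?case
  proof (cases "q = 0")
    case True
    then show ?thesis using v_fact_n less.prems p1 by simp
  next
    case False
    have "q < n" unfolding q_def using less.prems p_gt_1 by simp
    with False have "v (fact q) \<le> ereal ((real q - 1) / (real p - 1))"
      by (intro less.IH) auto
    from add_left_mono[OF this, of "ereal (real q)"]
    have "v (fact n) \<le> ereal (real q + (real q - 1) / (real p - 1))"
      unfolding v_fact_n by simp
    also have "real q + (real q - 1) / (real p - 1) = (real p * real q - 1) / (real p - 1)"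
      using p1 by (simp add: field_simps)
    also have "\<dots> \<le> (real n - 1) / (real p - 1)"
    proof -
      have "real p * real q \<le> real n"
        unfolding q_def by (metis of_nat_le_iff of_nat_mult div_times_less_eq_dividend mult.commute)
      then show ?thesis using p1 by (intro divide_right_mono) simp_all
    qed
    finally show ?thesis by simp
  qed
qed

lemma v_inverse_fact_ge: "ereal (- real n / (real p - 1)) \<le> v (1 / fact n)"
proof (cases "n = 0")
  case False
  have p1: "real p - 1 > 0" using p_gt_1 by simp
  have "v (fact n) \<le> ereal (real n / (real p - 1))"
    using v_fact_le[of n] False p1 by (simp add: divide_right_mono order_trans)
  then have "- ereal (real n / (real p - 1)) \<le> - v (fact n)"
    by (simp only: ereal_minus_le_minus)
  then show ?thesis
    by (simp add: divide_inverse v_inverse)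
qed simp

lemma v_p_power_div_fact_ge:
  assumes "n \<ge> 1"
  shows "1 \<le> v (of_nat p ^ n / fact n)"
proof -
  have "(real n - 1) / (real p - 1) \<le> (real n - 1) / 1"
    using p_gt_1 assms by (intro divide_left_mono) simp_all
  then have "v (fact n) \<le> ereal (real n - 1)"
    using v_fact_le[OF assms] by (simp add: order_trans)
  then show ?thesis
    by (cases "v (fact n)") (simp_all add: divide_inverse v_mult v_inverse)
qed

lemma v_rat_power_minus_self_ge:
  assumes "x \<in> \<rat>" and "0 \<le> v x"
  shows "1 \<le> v (x ^ p - x)"
proof -
  obtain a b where ab: "b > 0" "coprime a b" "x = of_int a / of_int b"
    using Rats_cases'[OF assms(1)] by metis
  have "\<not> int p dvd b"
  proof
    assume "int p dvd b"
    have "\<not> int p dvd a"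
    proof
      assume "int p dvd a"
      then have "int p dvd 1"
        using coprime_common_divisor[OF ab(2)] \<open>int p dvd b\<close> by blast
      then show False using p_gt_1 by simp
    qed
    then have "v x = - v (of_int b)"
      using ab by (simp add: divide_inverse v_mult v_inverse v_of_int_not_multiple)
    with assms(2) v_of_int_multiple_ge[OF \<open>int p dvd b\<close>] show False
      by (cases "v (of_int b)") auto
  qed
  then have vb: "v (of_int b) = 0" by (rule v_of_int_not_multiple)
  have "int p dvd (a ^ p - a) * b - a * (b ^ p - b)"
    using prime_dvd_power_minus_self[OF prime] by (simp add: dvd_diff)
  then have numerator: "1 \<le> v (of_int (a ^ p * b - a * b ^ p))"
    by (intro v_of_int_multiple_ge) (simp add: algebra_simps)
  have b0: "(of_int b :: 'a) \<noteq> 0" using ab by simp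
  have "x ^ p - x = of_int (a ^ p * b - a * b ^ p) * inverse (of_int b ^ (p + 1))"
    unfolding ab(3) using b0 by (simp add: field_simps power_divide)
  also have "v \<dots> = v (of_int (a ^ p * b - a * b ^ p))"
    using vb b0 by (simp add: v_mult v_inverse v_power)
  finally show ?thesis using numerator by simp
qed


definition coeffs_v_ge :: "ereal \<Rightarrow> 'a fps \<Rightarrow> bool" where
  "coeffs_v_ge a f \<longleftrightarrow> (\<forall>n. a \<le> v (f $ n))"

lemma coeffs_v_ge_add: "coeffs_v_ge a f \<Longrightarrow> coeffs_v_ge a g \<Longrightarrow> coeffs_v_ge a (f + g)"
  unfolding coeffs_v_ge_def by (simp add: v_add_ge)

lemma coeffs_v_ge_mult: "coeffs_v_ge a f \<Longrightarrow> coeffs_v_ge b g \<Longrightarrow> coeffs_v_ge (a + b) (f * g)"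
  unfolding coeffs_v_ge_def fps_mult_nth by (intro allI v_sum_ge v_mult_ge) auto

lemma coeffs_v_ge_power: "coeffs_v_ge 0 f \<Longrightarrow> coeffs_v_ge 0 (f ^ n)"
proof (induction n)
  case 0
  then show ?case by (simp add: coeffs_v_ge_def fps_one_nth)
next
  case (Suc n)
  then show ?case using coeffs_v_ge_mult[of 0 f 0 "f ^ n"] by simp
qed

lemma coeffs_v_ge_sum: "(\<And>i. i \<in> S \<Longrightarrow> coeffs_v_ge a (f i)) \<Longrightarrow> coeffs_v_ge a (sum f S)"
  unfolding coeffs_v_ge_def fps_sum_nth by (intro allI v_sum_ge) blast

lemma coeffs_v_ge_monom: "a \<le> v c \<Longrightarrow> coeffs_v_ge a (fps_const c * fps_X ^ m)"
  unfolding coeffs_v_ge_def by (simp add: fps_X_power_nth)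

lemma coeffs_v_ge_of_nat_mult:
  assumes "p dvd m" and "coeffs_v_ge 0 f"
  shows "coeffs_v_ge 1 (of_nat m * f)"
proof -
  have "1 \<le> v (of_nat m :: 'a)"
    using v_of_int_multiple_ge[of "int m"] assms(1) by simp
  then show ?thesis
    using assms(2) unfolding coeffs_v_ge_def
    by (simp add: fps_of_nat v_mult_ge[where b = 0, simplified])
qed

lemma coeffs_v_ge_add_power_p:
  assumes "coeffs_v_ge 0 A" and "coeffs_v_ge 0 B"
  shows "coeffs_v_ge 1 ((A + B) ^ p - A ^ p - B ^ p)"
proof -
  define g where "g k = of_nat (p choose k) * A ^ k * B ^ (p - k)" for k
  have "(A + B) ^ p = (\<Sum>k\<le>p. g k)" unfolding g_def by (rule binomial_ring)
  also have "\<dots> = g p + (\<Sum>k\<in>{0..<p}. g k)"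
    by (simp add: atLeast0LessThan flip: lessThan_Suc_atMost)
  also have "(\<Sum>k\<in>{0..<p}. g k) = g 0 + (\<Sum>k\<in>{1..<p}. g k)"
    using p_gt_1 by (simp add: sum.atLeast_Suc_lessThan)
  finally have eq: "(A + B) ^ p - A ^ p - B ^ p = (\<Sum>k\<in>{1..<p}. g k)"
    unfolding g_def by simp
  have "coeffs_v_ge 1 (g k)" if "k \<in> {1..<p}" for k
  proof -
    have "p dvd (p choose k)" using that prime by (intro dvd_choose_prime) auto
    moreover have "coeffs_v_ge 0 (A ^ k * B ^ (p - k))"
      using coeffs_v_ge_mult[OF coeffs_v_ge_power[OF assms(1)] coeffs_v_ge_power[OF assms(2)]] by simp
    ultimately show ?thesis unfolding g_def by (simp add: coeffs_v_ge_of_nat_mult mult.assoc)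
  qed
  then show ?thesis unfolding eq by (rule coeffs_v_ge_sum)
qed

lemma frobenius_cutoff:
  assumes "\<And>i. i < m \<Longrightarrow> f $ i \<in> \<rat> \<and> 0 \<le> v (f $ i)"
  shows "coeffs_v_ge 1 (fps_cutoff m f ^ p - (fps_cutoff m f oo fps_X ^ p))"
  using assms
proof (induction m)
  case 0
  then show ?case using p_gt_1 by (simp add: coeffs_v_ge_def power_0_left)
next
  case (Suc m)
  let ?A = "fps_cutoff m f" and ?B = "fps_const (f $ m) * fps_X ^ m"
  have IH: "coeffs_v_ge 1 (?A ^ p - (?A oo fps_X ^ p))" using Suc by simp
  have A: "coeffs_v_ge 0 ?A" using Suc.prems by (simp add: coeffs_v_ge_def)
  have B: "coeffs_v_ge 0 ?B" using Suc.prems by (simp add: coeffs_v_ge_monom)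
  have "?B ^ p = fps_const ((f $ m) ^ p) * fps_X ^ (m * p)"
    by (simp add: power_mult_distrib fps_const_power power_mult)
  moreover have "?B oo fps_X ^ p = fps_const (f $ m) * fps_X ^ (m * p)"
    using p_gt_1 by (simp add: fps_X_power_compose_X_power flip: fps_const_mult_apply_left)
  ultimately have "?B ^ p - (?B oo fps_X ^ p) = fps_const ((f $ m) ^ p - f $ m) * fps_X ^ (m * p)"
    by (simp only: fps_const_sub[symmetric] left_diff_distrib)
  then have monomial: "coeffs_v_ge 1 (?B ^ p - (?B oo fps_X ^ p))"
    using Suc.prems by (simp add: coeffs_v_ge_monom v_rat_power_minus_self_ge)
  have "fps_cutoff (Suc m) f ^ p - (fps_cutoff (Suc m) f oo fps_X ^ p) =
    (?A ^ p - (?A oo fps_X ^ p)) + (?B ^ p - (?B oo fps_X ^ p)) + ((?A + ?B) ^ p - ?A ^ p - ?B ^ p)"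
    unfolding fps_cutoff_Suc fps_compose_add_distrib by (simp add: algebra_simps)
  then show ?case
    using coeffs_v_ge_add[OF coeffs_v_ge_add[OF IH monomial] coeffs_v_ge_add_power_p[OF A B]] by simp
qed

lemma v_mult_exp_p_nth_minus_ge:
  assumes "\<And>j. j < n \<Longrightarrow> 0 \<le> v (G $ j)"
  shows "1 \<le> v ((G * fps_exp (of_nat p)) $ n - G $ n)"
proof -
  have "(G * fps_exp (of_nat p)) $ n = (\<Sum>j<Suc n. G $ j * (of_nat p ^ (n - j) / fact (n - j)))"
    by (simp add: fps_mult_nth atLeast0AtMost lessThan_Suc_atMost)
  then have "(G * fps_exp (of_nat p)) $ n - G $ n = (\<Sum>j<n. G $ j * (of_nat p ^ (n - j) / fact (n - j)))"
    by simp
  also have "1 \<le> v \<dots>"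
  proof (rule v_sum_ge)
    fix j assume "j \<in> {..<n}"
    then show "1 \<le> v (G $ j * (of_nat p ^ (n - j) / fact (n - j)))"
      using v_mult_ge[OF assms v_p_power_div_fact_ge, of j "n - j"] by simp
  qed
  finally show ?thesis .
qed

lemma E_series_nth_v_nonneg:
  assumes "n < p ^ Suc N"
  shows "0 \<le> v (E_series p N $ n)"
  using assms
proof (induction n rule: less_induct)
  case (less n)
  let ?F = "E_series p N :: 'a fps"
  let ?T = "fps_cutoff n ?F"
  have IH: "0 \<le> v (?F $ j)" if "j < n" for j
    using less that by simp
  show ?case
  proof (cases "n = 0")
    case False
    then have "0 < n" by simp
    have "1 \<le> v (((?F oo fps_X ^ p) * fps_exp (of_nat p)) $ n - (?F oo fps_X ^ p) $ n)"
    proof (rule v_mult_exp_p_nth_minus_ge)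
      fix j assume "j < n"
      then have "j div p < n" by (meson div_le_dividend le_less_trans)
      then show "0 \<le> v ((?F oo fps_X ^ p) $ j)"
        using p_gt_1 IH by (simp add: fps_compose_X_power_nth)
    qed
    moreover have "1 \<le> v ((?T ^ p - (?T oo fps_X ^ p)) $ n)"
      using frobenius_cutoff[of n ?F] IH E_series_nth_Rats unfolding coeffs_v_ge_def by blast
    ultimately have "1 \<le> v (of_nat p * ?F $ n)"
      unfolding of_nat_p_times_E_series_nth[OF p_gt_1 \<open>0 < n\<close> less.prems] by (rule v_diff_ge)
    then show ?thesis by (cases "v (?F $ n)") (simp_all add: v_mult)
  qed (simp add: E_series_def)
qed

definition coeffs_v_slope_ge :: "real \<Rightarrow> 'a fps \<Rightarrow> bool" where
  "coeffs_v_slope_ge c f \<longleftrightarrow> (\<forall>n. ereal (c * real n) \<le> v (f $ n))"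

lemma coeffs_v_slope_ge_mono: "c' \<le> c \<Longrightarrow> coeffs_v_slope_ge c f \<Longrightarrow> coeffs_v_slope_ge c' f"
  unfolding coeffs_v_slope_ge_def by (meson ereal_less_eq(3) mult_right_mono of_nat_0_le_iff order_trans)

lemma coeffs_v_slope_ge_mult:
  assumes "coeffs_v_slope_ge c f" and "coeffs_v_slope_ge c g"
  shows "coeffs_v_slope_ge c (f * g)"
  unfolding coeffs_v_slope_ge_def fps_mult_nth
proof (intro allI v_sum_ge)
  fix n i :: nat assume "i \<in> {0..n}"
  then have "ereal (c * real i) + ereal (c * real (n - i)) = ereal (c * real n)"
    by (simp add: of_nat_diff algebra_simps)
  with assms show "ereal (c * real n) \<le> v (f $ i * g $ (n - i))"
    unfolding coeffs_v_slope_ge_def by (metis v_mult_ge)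
qed

lemma coeffs_v_slope_ge_prod:
  "(\<And>i. i \<in> S \<Longrightarrow> coeffs_v_slope_ge c (f i)) \<Longrightarrow> coeffs_v_slope_ge c (prod f S)"
proof (induction S rule: infinite_finite_induct)
  case (insert x F)
  then show ?case by (simp add: coeffs_v_slope_ge_mult)
qed (simp_all add: coeffs_v_slope_ge_def fps_one_nth)

lemma coeffs_v_slope_ge_compose_scale:
  assumes "ereal r \<le> v \<pi>" and "coeffs_v_slope_ge c f"
  shows "coeffs_v_slope_ge (c + r) (f oo (fps_const \<pi> * fps_X))"
  unfolding coeffs_v_slope_ge_def
proof
  fix n
  have "ereal (real n * r) + ereal (c * real n) \<le> v (\<pi> ^ n * f $ n)"
    using assms unfolding coeffs_v_slope_ge_def by (intro v_mult_ge v_power_ge) auto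
  then show "ereal ((c + r) * real n) \<le> v ((f oo (fps_const \<pi> * fps_X)) $ n)"
    unfolding fps_compose_linear by (simp add: algebra_simps)
qed

lemma coeffs_v_slope_ge_exp_monom:
  assumes "q \<ge> 1" and "ereal s \<le> v c"
  shows "coeffs_v_slope_ge ((s - 1 / (real p - 1)) / real q) (fps_exp c oo fps_X ^ q)"
  unfolding coeffs_v_slope_ge_def
proof
  fix n
  show "ereal ((s - 1 / (real p - 1)) / real q * real n) \<le> v ((fps_exp c oo fps_X ^ q) $ n)"
  proof (cases "q dvd n")
    case True
    then obtain t where n: "n = q * t" by blast
    have "ereal (real t * s) + ereal (- real t / (real p - 1)) \<le> v (c ^ t * (1 / fact t))"
      by (intro v_mult_ge v_power_ge assms(2) v_inverse_fact_ge)
    moreover have "(s - 1 / (real p - 1)) / real q * real n = real t * s + - real t / (real p - 1)"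
      using assms(1) by (simp add: n field_simps)
    ultimately show ?thesis
      using assms(1) by (simp add: fps_compose_X_power_nth n)
  qed (use assms(1) in \<open>simp add: fps_compose_X_power_nth\<close>)
qed

lemma exp_tail_coeffs_v_slope_ge:
  assumes "k < j"
  shows "coeffs_v_slope_ge (- (real k + 1 + 1 / (real p - 1)) / real p ^ (k + 1))
    (fps_exp (- 1 / of_nat (p ^ j)) oo fps_X ^ (p ^ j))"
proof -
  have "ereal (- real j) \<le> v (- 1 / of_nat (p ^ j) :: 'a)"
    using p_gt_1 by (simp add: divide_inverse v_inverse)
  then have "coeffs_v_slope_ge ((- real j - 1 / (real p - 1)) / real (p ^ j))
      (fps_exp (- 1 / of_nat (p ^ j)) oo fps_X ^ (p ^ j))"
    using p_gt_1 by (intro coeffs_v_slope_ge_exp_monom) simp_all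
  moreover have "(real j + 1 / (real p - 1)) / real p ^ j \<le>
      (real (Suc k) + 1 / (real p - 1)) / real p ^ Suc k"
    using assms p_gt_1 by (intro divide_power_antimono) auto
  then have "- ((real k + 1 + 1 / (real p - 1)) / real p ^ (k + 1)) \<le>
      - ((real j + 1 / (real p - 1)) / real p ^ j)"
    by (simp add: add_ac)
  then have "- (real k + 1 + 1 / (real p - 1)) / real p ^ (k + 1) \<le>
      (- real j - 1 / (real p - 1)) / real (p ^ j)"
    by (simp only: minus_divide_left diff_conv_add_uminus minus_add_distrib of_nat_power)
  ultimately show ?thesis by (rule coeffs_v_slope_ge_mono[rotated])
qed

lemma E_series_coeffs_v_slope_ge:
  "coeffs_v_slope_ge (- (real k + 1 + 1 / (real p - 1)) / real p ^ (k + 1)) (E_series p k)"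
  unfolding coeffs_v_slope_ge_def
proof
  fix i
  define c where "c = - (real k + 1 + 1 / (real p - 1)) / real p ^ (k + 1)"
  define N where "N = k + i"
  define Q where "Q = (\<Prod>j\<in>{k<..N}. fps_exp (- 1 / of_nat (p ^ j)) oo fps_X ^ (p ^ j) :: 'a fps)"
  have "i < 2 ^ i" by (rule less_exp)
  also have "(2::nat) ^ i \<le> p ^ i" using p_gt_1 by (intro power_mono) auto
  also have "p ^ i \<le> p ^ Suc N" unfolding N_def using p_gt_1 by (intro power_increasing) auto
  finally have "coeffs_v_slope_ge 0 (fps_cutoff (Suc i) (E_series p N))"
    unfolding coeffs_v_slope_ge_def
    by (auto intro: E_series_nth_v_nonneg simp flip: zero_ereal_def)
  moreover have "c \<le> 0"
  proof -
    have "0 \<le> 1 / (real p - 1)" using p_gt_1 by simp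
    then show ?thesis unfolding c_def using p_gt_1 by (intro divide_nonpos_pos) (linarith, simp)
  qed
  ultimately have "coeffs_v_slope_ge c (fps_cutoff (Suc i) (E_series p N))"
    by (rule coeffs_v_slope_ge_mono[rotated])
  moreover have "coeffs_v_slope_ge c Q"
    unfolding Q_def c_def by (intro coeffs_v_slope_ge_prod exp_tail_coeffs_v_slope_ge) simp
  ultimately have "coeffs_v_slope_ge c (fps_cutoff (Suc i) (E_series p N) * Q)"
    by (rule coeffs_v_slope_ge_mult)
  moreover have "E_series p k = E_series p N * Q"
    unfolding Q_def using p_gt_1 by (intro E_series_split) (simp_all add: N_def)
  then have "E_series p k $ i = (fps_cutoff (Suc i) (E_series p N) * Q) $ i"
    by (simp add: fps_cutoff_left_mult_nth)
  ultimately show "ereal (c * real i) \<le> v (E_series p k $ i)"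
    unfolding coeffs_v_slope_ge_def by simp
qed

end

lemma theta_slope_eq:
  fixes k :: nat and q :: real
  assumes "k \<ge> 1" and "q > 1"
  shows "- (real k + 1 + 1 / (q - 1)) / q ^ (k + 1) + 1 / (q ^ (k - 1) * (q - 1)) =
    (q - real k) / q ^ (k + 1)"
proof -
  define P where "P = q ^ (k - 1)"
  have q_power: "q ^ (k + 1) = P * q\<^sup>2"
    using assms(1) by (simp add: P_def flip: power_add)
  have "q\<^sup>2 - 1 = (q + 1) * (q - 1)" by (simp add: power2_eq_square algebra_simps)
  then have "q\<^sup>2 / (q - 1) - 1 / (q - 1) = q + 1"
    using assms(2) by (simp flip: diff_divide_distrib)
  moreover have "1 / (P * (q - 1)) = q\<^sup>2 / (q - 1) / (P * q\<^sup>2)"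
    using assms(2) by (simp add: P_def)
  ultimately show ?thesis
    unfolding q_power P_def[symmetric]
    by (simp add: add_divide_distrib diff_divide_distrib algebra_simps)
qed

theorem mainTheorem5:
  fixes p m k :: nat and v :: "'a::field_char_0 \<Rightarrow> ereal" and \<pi> :: 'a
  assumes "prime p" and "m \<ge> 1" and "p > m" and "1 \<le> k" and "k \<le> m"
    and "p_valuation p v"
    and "(\<Sum>i\<le>k. \<pi> ^ (p ^ i) / of_nat (p ^ i)) = 0"
    and "v \<pi> = ereal (1 / (real p ^ (k - 1) * (real p - 1)))"
  shows "\<forall>i. v (fps_nth (theta_series p k \<pi>) i) \<ge> ereal (real i * (real p - real k) / real p ^ (k + 1))"
proof -
  \<comment> \<open>Only \<open>v \<pi>\<close> enters.\<close>
  interpret p_adic_valuation p v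
    using assms(6,1) by unfold_locales
  have "coeffs_v_slope_ge
      (- (real k + 1 + 1 / (real p - 1)) / real p ^ (k + 1) + 1 / (real p ^ (k - 1) * (real p - 1)))
      (theta_series p k \<pi>)"
    unfolding theta_series_def
    using assms(8) E_series_coeffs_v_slope_ge by (intro coeffs_v_slope_ge_compose_scale) simp_all
  moreover have "- (real k + 1 + 1 / (real p - 1)) / real p ^ (k + 1) + 1 / (real p ^ (k - 1) * (real p - 1)) =
      (real p - real k) / real p ^ (k + 1)"
    using p_gt_1 by (intro theta_slope_eq assms(4)) simp
  ultimately show ?thesis
    unfolding coeffs_v_slope_ge_def by (simp add: mult.commute)
qed

end
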